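(* Let $\mathcal H$ be a Heisenberg $p$-group with centre $\mathcal Z$ and let $\alpha$ be an automorphism of $\mathcal H$ of order two whose restriction to $\mathcal Z$ is not the identity; let $\mathcal H^+_\alpha=\{h\in\mathcal H:\alpha(h)=h\}$. Then $\mathcal H^+_\alpha\,\alpha(h)\,\mathcal H^+_\alpha=\mathcal H^+_\alpha\,h^{-1}\,\mathcal H^+_\alpha$ for all $h\in\mathcal H$, and consequently $(\mathcal H,\mathcal H^+_\alpha)$ is a Gelfand pair: for every irreducible representation $\rho$ of $\mathcal H$, $\dim\operatorname{Hom}_{\mathcal H^+_\alpha}(\rho,1)\le1$.
   Context: $p$ is an odd prime. A Heisenberg $p$-group is a group isomorphic to $W\boxtimes C$, where $C$ is cyclic of order $p$, $W$ is a finite $\mathbb F_p$-vector space with a nondegenerate alternating biadditive $C$-valued form $\langle\,,\rangle$, and $W\boxtimes C$ is $W\times C$ with multiplication $(w_1,z_1)(w_2,z_2)=(w_1+w_2,z_1+z_2+\tfrac12\langle w_1,w_2\rangle)$. *)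

theory Defs
  imports "HOL-Algebra.Algebra" "Jordan_Normal_Form.Matrix"
begin

text \<open>W is a finite F_p-vector space, modelled (in multiplicative notation) as a finite
commutative group of exponent p (i.e. an elementary abelian p-group; its F_p-structure is
canonical). C is the cyclic group of order p, modelled as the integers {0..<p} modulo p.
B is a nondegenerate alternating biadditive C-valued form on W.\<close>

definition alt_form :: "('w, 'm) monoid_scheme \<Rightarrow> nat \<Rightarrow> ('w \<Rightarrow> 'w \<Rightarrow> int) \<Rightarrow> bool" where
  "alt_form W p B \<longleftrightarrow>
     (\<forall>v\<in>carrier W. \<forall>w\<in>carrier W. B v w \<in> {0..<int p}) \<and>
     (\<forall>u\<in>carrier W. \<forall>v\<in>carrier W. \<forall>w\<in>carrier W.
        B (u \<otimes>\<^bsub>W\<^esub> v) w = (B u w + B v w) mod int p) \<and>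
     (\<forall>u\<in>carrier W. \<forall>v\<in>carrier W. \<forall>w\<in>carrier W.
        B u (v \<otimes>\<^bsub>W\<^esub> w) = (B u v + B u w) mod int p) \<and>
     (\<forall>w\<in>carrier W. B w w = 0) \<and>
     (\<forall>v\<in>carrier W. (\<forall>w\<in>carrier W. B v w = 0) \<longrightarrow> v = \<one>\<^bsub>W\<^esub>)"

definition Fp_space :: "('w, 'm) monoid_scheme \<Rightarrow> nat \<Rightarrow> bool" where
  "Fp_space W p \<longleftrightarrow> comm_group W \<and> finite (carrier W) \<and>
     (\<forall>w\<in>carrier W. w [^]\<^bsub>W\<^esub> p = \<one>\<^bsub>W\<^esub>)"

text \<open>The group W \<boxtimes> C: (w1,z1)(w2,z2) = (w1+w2, z1+z2+ (1/2)<w1,w2>), where 1/2 in Z/p is (p+1)/2.\<close>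

definition heis :: "('w, 'm) monoid_scheme \<Rightarrow> nat \<Rightarrow> ('w \<Rightarrow> 'w \<Rightarrow> int) \<Rightarrow> ('w \<times> int) monoid" where
  "heis W p B = \<lparr> carrier = carrier W \<times> {0..<int p},
     monoid.mult = (\<lambda>(w1, z1) (w2, z2). (w1 \<otimes>\<^bsub>W\<^esub> w2,
                 (z1 + z2 + ((int p + 1) div 2) * B w1 w2) mod int p)),
     monoid.one = (\<one>\<^bsub>W\<^esub>, 0) \<rparr>"

definition heisenberg_p_group :: "('g, 'n) monoid_scheme \<Rightarrow> nat \<Rightarrow> ('w, 'm) monoid_scheme \<Rightarrow> ('w \<Rightarrow> 'w \<Rightarrow> int) \<Rightarrow> bool" where
  "heisenberg_p_group H p W B \<longleftrightarrow> Fp_space W p \<and> alt_form W p B \<and> H \<cong> heis W p B"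

definition centre :: "('g, 'n) monoid_scheme \<Rightarrow> 'g set" where
  "centre G = {z \<in> carrier G. \<forall>g\<in>carrier G. z \<otimes>\<^bsub>G\<^esub> g = g \<otimes>\<^bsub>G\<^esub> z}"

definition fixed_points :: "('g, 'n) monoid_scheme \<Rightarrow> ('g \<Rightarrow> 'g) \<Rightarrow> 'g set" where
  "fixed_points G \<alpha> = {h \<in> carrier G. \<alpha> h = h}"

definition representation :: "('g, 'n) monoid_scheme \<Rightarrow> nat \<Rightarrow> ('g \<Rightarrow> complex mat) \<Rightarrow> bool" where
  "representation G n \<rho> \<longleftrightarrow>
     (\<forall>g\<in>carrier G. \<rho> g \<in> carrier_mat n n) \<and>
     \<rho> \<one>\<^bsub>G\<^esub> = 1\<^sub>m n \<and>
     (\<forall>g\<in>carrier G. \<forall>h\<in>carrier G. \<rho> (g \<otimes>\<^bsub>G\<^esub> h) = \<rho> g * \<rho> h)"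

definition subspace_vec :: "nat \<Rightarrow> complex vec set \<Rightarrow> bool" where
  "subspace_vec n U \<longleftrightarrow> U \<subseteq> carrier_vec n \<and> 0\<^sub>v n \<in> U \<and>
     (\<forall>u\<in>U. \<forall>v\<in>U. u + v \<in> U) \<and> (\<forall>c. \<forall>u\<in>U. c \<cdot>\<^sub>v u \<in> U)"

definition irreducible_rep :: "('g, 'n) monoid_scheme \<Rightarrow> nat \<Rightarrow> ('g \<Rightarrow> complex mat) \<Rightarrow> bool" where
  "irreducible_rep G n \<rho> \<longleftrightarrow> representation G n \<rho> \<and> n > 0 \<and>
     (\<forall>U. subspace_vec n U \<and> (\<forall>g\<in>carrier G. \<forall>u\<in>U. \<rho> g *\<^sub>v u \<in> U)
          \<longrightarrow> U = {0\<^sub>v n} \<or> U = carrier_vec n)"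

text \<open>Hom_K(\<rho>, 1): linear functionals on C^n (represented as v \<mapsto> f \<bullet> v) that are
K-invariant.\<close>

definition Hom_triv :: "'g set \<Rightarrow> nat \<Rightarrow> ('g \<Rightarrow> complex mat) \<Rightarrow> complex vec set" where
  "Hom_triv K n \<rho> = {f \<in> carrier_vec n. \<forall>h\<in>K. \<forall>v\<in>carrier_vec n. f \<bullet> (\<rho> h *\<^sub>v v) = f \<bullet> v}"

definition dim_le_one :: "nat \<Rightarrow> complex vec set \<Rightarrow> bool" where
  "dim_le_one n S \<longleftrightarrow> (\<exists>g\<in>carrier_vec n. S \<subseteq> {c \<cdot>\<^sub>v g | c. True})"

end

theory Submission
  imports Defs "Jordan_Normal_Form.Spectral_Radius"
begin

text \<open>
  A Heisenberg \<open>p\<close>-group has odd exponent \<open>p\<close> and central commutators. For an involutive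
  automorphism \<open>\<alpha>\<close> and \<open>g \<in> H\<close> put \<open>u = \<alpha>(g) g\<close> and \<open>v = u\<^bsup>(p+1)/2\<^esup>\<close>, so that \<open>v\<^sup>2 = u\<close>
  and \<open>\<alpha>(v) = g v g\<inverse>\<close>. Then \<open>c = v\<inverse> \<alpha>(v)\<close> is a central commutator with \<open>\<alpha>(c) = c\<inverse>\<close>, and
  \<open>k = v c\<^bsup>(p+1)/2\<^esup>\<close> is fixed by \<open>\<alpha>\<close> and satisfies \<open>\<alpha>(g) = k g\<inverse> k\<close>; hence \<open>\<alpha>(h)\<close> and \<open>h\<inverse>\<close>
  lie in the same double coset of \<open>K = H\<^sup>+\<^sub>\<alpha>\<close>.

  The Gelfand property then follows by Gelfand's trick. Given a nonzero \<open>K\<close>-invariant functional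
  \<open>f\<^sub>1\<close>, choose a \<open>K\<close>-fixed vector \<open>w\<close> with \<open>f\<^sub>1(w) \<noteq> 0\<close>. The spherical functions
  \<open>\<phi>\<^sub>f(x) = f(\<rho>(x) w)\<close> are invariant under the anti-involution \<open>x \<mapsto> \<alpha>(x\<inverse>)\<close>, which reverses
  convolution, while Schur orthogonality gives \<open>\<phi>\<^sub>f * \<phi>\<^sub>g = (|H|/n) g(w) \<phi>\<^sub>f\<close>. Hence
  \<open>f(w) \<phi>\<^sub>f\<^sub>1 = f\<^sub>1(w) \<phi>\<^sub>f\<close>, so \<open>f(w) f\<^sub>1 - f\<^sub>1(w) f\<close> annihilates the orbit of \<open>w\<close>, which spans by
  irreducibility.
\<close>

section \<open>Involutions of groups of nilpotency class two\<close>

lemma (in group) inv_mult_cancel_left [simp]: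
  "x \<in> carrier G \<Longrightarrow> y \<in> carrier G \<Longrightarrow> inv x \<otimes> (x \<otimes> y) = y"
  by (simp add: m_assoc [symmetric])

lemma (in group) mult_inv_cancel_left [simp]:
  "x \<in> carrier G \<Longrightarrow> y \<in> carrier G \<Longrightarrow> x \<otimes> (inv x \<otimes> y) = y"
  by (simp add: m_assoc [symmetric])

lemma (in group) nat_pow_conj:
  assumes "g \<in> carrier G" "u \<in> carrier G"
  shows "(g \<otimes> u \<otimes> inv g) [^] (n::nat) = g \<otimes> u [^] n \<otimes> inv g"
proof (induction n)
  case 0
  then show ?case using assms by (simp add: r_inv)
next
  case (Suc n)
  then have "(g \<otimes> u \<otimes> inv g) [^] Suc n = (g \<otimes> u [^] n \<otimes> inv g) \<otimes> (g \<otimes> u \<otimes> inv g)"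
    by simp
  also have "\<dots> = g \<otimes> (u [^] n \<otimes> u) \<otimes> inv g"
    using assms by (simp add: m_assoc)
  finally show ?case by simp
qed

lemma (in group) nat_pow_half_squared:
  assumes "odd (p::nat)" "x \<in> carrier G" "x [^] p = \<one>"
  shows "x [^] (Suc p div 2) \<otimes> x [^] (Suc p div 2) = x"
proof -
  have "Suc p div 2 + Suc p div 2 = Suc p" using \<open>odd p\<close> by presburger
  then show ?thesis using assms(2,3) by (simp add: nat_pow_mult)
qed

lemma (in group) involution_fixes_mult_sqrt:
  assumes hom: "\<alpha> \<in> hom G G" and involutive: "\<And>x. x \<in> carrier G \<Longrightarrow> \<alpha> (\<alpha> x) = x"
    and v: "v \<in> carrier G"
    and sqrt: "(inv v \<otimes> \<alpha> v) [^] (m::nat) \<otimes> (inv v \<otimes> \<alpha> v) [^] m = inv v \<otimes> \<alpha> v"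
  shows "\<alpha> (v \<otimes> (inv v \<otimes> \<alpha> v) [^] m) = v \<otimes> (inv v \<otimes> \<alpha> v) [^] m"
proof -
  interpret \<alpha>: group_hom G G \<alpha> using hom by unfold_locales
  define c where "c = inv v \<otimes> \<alpha> v"
  have c: "c \<in> carrier G" using v unfolding c_def by simp
  have "\<alpha> v = v \<otimes> c" and "\<alpha> c = inv c"
    unfolding c_def using v involutive by (simp_all add: m_assoc [symmetric] inv_mult_group)
  then have "\<alpha> (v \<otimes> c [^] m) = v \<otimes> c \<otimes> inv (c [^] m)"
    using v c by (simp add: \<alpha>.hom_nat_pow nat_pow_inv)
  also have "\<dots> = v \<otimes> (c [^] m \<otimes> c [^] m) \<otimes> inv (c [^] m)"
    using sqrt unfolding c_def by simp
  also have "\<dots> = v \<otimes> c [^] m"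
    using v c by (simp add: m_assoc)
  finally show ?thesis unfolding c_def .
qed

lemma (in group) involution_eq_sandwich_inv:
  assumes "odd (p::nat)"
    and exponent: "\<And>x. x \<in> carrier G \<Longrightarrow> x [^] p = \<one>"
    and class_two: "derived_set G (carrier G) \<subseteq> centre G"
    and hom: "\<alpha> \<in> hom G G" and involutive: "\<And>x. x \<in> carrier G \<Longrightarrow> \<alpha> (\<alpha> x) = x"
    and g: "g \<in> carrier G"
  shows "\<exists>k\<in>fixed_points G \<alpha>. \<alpha> g = k \<otimes> inv g \<otimes> k"
proof -
  interpret \<alpha>: group_hom G G \<alpha> using hom by unfold_locales
  define m where "m = Suc p div 2"
  have sqrt: "x [^] m \<otimes> x [^] m = x" if "x \<in> carrier G" for x
    unfolding m_def using nat_pow_half_squared[OF \<open>odd p\<close> that exponent[OF that]] .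
  define u where "u = \<alpha> g \<otimes> g"
  define v where "v = u [^] m"
  define c where "c = inv v \<otimes> \<alpha> v"
  define k where "k = v \<otimes> c [^] m"
  have u: "u \<in> carrier G" and v: "v \<in> carrier G" and c: "c \<in> carrier G"
    using g unfolding u_def v_def c_def by auto
  have k_fixed: "k \<in> fixed_points G \<alpha>"
    using involution_fixes_mult_sqrt[OF hom involutive v] sqrt[OF c] v c
    unfolding k_def c_def fixed_points_def by simp
  have "\<alpha> u = g \<otimes> u \<otimes> inv g"
    unfolding u_def using g involutive by (simp add: m_assoc)
  then have "\<alpha> v = g \<otimes> v \<otimes> inv g"
    unfolding v_def using u g by (simp add: \<alpha>.hom_nat_pow nat_pow_conj)
  then have c_commutator: "c = inv v \<otimes> g \<otimes> inv (inv v) \<otimes> inv g"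
    unfolding c_def using g v by (simp add: m_assoc)
  have c_central: "c [^] m \<otimes> y = y \<otimes> c [^] m" if "y \<in> carrier G" for y
  proof -
    have "c \<in> derived_set G (carrier G)"
      unfolding c_commutator using g v by blast
    then have "c \<otimes> y = y \<otimes> c" using class_two that unfolding centre_def by blast
    then show ?thesis using group_commutes_pow c that by blast
  qed
  have "k \<otimes> inv g \<otimes> k = v \<otimes> (c [^] m \<otimes> (inv g \<otimes> v)) \<otimes> c [^] m"
    unfolding k_def using v c g by (simp add: m_assoc)
  also have "\<dots> = v \<otimes> inv g \<otimes> v \<otimes> (c [^] m \<otimes> c [^] m)"
    using c_central[of "inv g \<otimes> v"] v c g by (simp add: m_assoc)
  also have "\<dots> = v \<otimes> inv g \<otimes> v \<otimes> (inv v \<otimes> g \<otimes> v \<otimes> inv g)"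
    using sqrt[OF c] c_commutator v by simp
  also have "\<dots> = v \<otimes> v \<otimes> inv g"
    using v g by (simp add: m_assoc)
  also have "\<dots> = \<alpha> g"
    using sqrt[OF u] g unfolding v_def u_def by (simp add: m_assoc)
  finally show ?thesis using k_fixed by metis
qed

lemma (in group) subgroup_fixed_points:
  assumes "\<alpha> \<in> hom G G"
  shows "subgroup (fixed_points G \<alpha>) G"
proof -
  interpret \<alpha>: group_hom G G \<alpha> using assms by unfold_locales
  show ?thesis
    by (rule subgroupI) (auto simp: fixed_points_def)
qed

lemma (in group) double_coset_sandwich:
  assumes K: "subgroup K G" and "k1 \<in> K" "k2 \<in> K" "x \<in> carrier G"
  shows "K <#> {k1 \<otimes> x \<otimes> k2} <#> K = K <#> {x} <#> K"
proof -
  have K_carrier: "K \<subseteq> carrier G" and k: "k1 \<in> carrier G" "k2 \<in> carrier G"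
    using assms subgroup.subset by blast+
  have singleton_mult: "{a \<otimes> b} = {a} <#> {b}" for a b
    by (simp add: set_mult_def)
  have "K <#> {k1} = K" "{k2} <#> K = K"
    using assms k coset_join2 coset_join3
    by (simp_all flip: r_coset_eq_set_mult l_coset_eq_set_mult)
  moreover have "K <#> {k1 \<otimes> x \<otimes> k2} <#> K = (K <#> {k1}) <#> {x} <#> ({k2} <#> K)"
    unfolding singleton_mult using K_carrier k \<open>x \<in> carrier G\<close>
    by (simp add: set_mult_assoc set_mult_closed)
  ultimately show ?thesis
    using K_carrier \<open>x \<in> carrier G\<close> by (simp add: set_mult_assoc set_mult_closed)
qed

lemma (in group) mem_double_coset:
  assumes "subgroup K G" "y \<in> carrier G"
  shows "y \<in> K <#> {y} <#> K"
proof -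
  have "\<one> \<otimes> y \<otimes> \<one> \<in> K <#> {y} <#> K"
    using subgroup.one_closed[OF assms(1)] unfolding set_mult_def by blast
  then show ?thesis using assms(2) by simp
qed

section \<open>Heisenberg groups\<close>

lemma mod_double_eq_self_imp_zero:
  fixes b P :: int
  assumes "0 \<le> b" "b < P" "(b + b) mod P = b"
  shows "b = 0"
proof -
  have "b mod P = b" using assms(1,2) by simp
  then have "(b + b) mod P = b mod P" using assms(3) by simp
  then have "P dvd b" by (simp add: mod_eq_dvd_iff)
  then show ?thesis using assms(1,2) by (metis \<open>b mod P = b\<close> dvd_imp_mod_0)
qed

lemma mod_add_left_mult_right_eq:
  "((a::int) mod n + b + c * (d mod n)) mod n = (a + b + c * d) mod n"
proof -
  have "(a mod n + b + c * (d mod n)) mod n = ((a mod n + b) mod n + c * (d mod n) mod n) mod n"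
    by (rule mod_add_eq [symmetric])
  also have "\<dots> = ((a + b) mod n + c * d mod n) mod n"
    by (simp only: mod_add_left_eq mod_mult_right_eq)
  finally show ?thesis by (simp add: mod_add_eq)
qed

lemma mod_add_right_mult_right_eq:
  "((a::int) + b mod n + c * (d mod n)) mod n = (a + b + c * d) mod n"
  using mod_add_left_mult_right_eq[of b n a c d] by (simp add: add.commute)

lemma heis_mult:
  "(w1, z1) \<otimes>\<^bsub>heis W p B\<^esub> (w2, z2) = (w1 \<otimes>\<^bsub>W\<^esub> w2, (z1 + z2 + ((int p + 1) div 2) * B w1 w2) mod int p)"
  by (simp add: heis_def)

lemma heis_carrier: "carrier (heis W p B) = carrier W \<times> {0..<int p}"
  by (simp add: heis_def)

lemma heis_one: "\<one>\<^bsub>heis W p B\<^esub> = (\<one>\<^bsub>W\<^esub>, 0)"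
  by (simp add: heis_def)

lemma fst_hom_heis: "fst \<in> hom (heis W p B) W"
  by (rule homI) (auto simp: heis_carrier heis_mult)

context
  fixes W :: "('w, 'm) monoid_scheme" and p :: nat and B :: "'w \<Rightarrow> 'w \<Rightarrow> int"
  assumes B: "alt_form W p B"
begin

lemma alt_form_range: "v \<in> carrier W \<Longrightarrow> w \<in> carrier W \<Longrightarrow> 0 \<le> B v w \<and> B v w < int p"
  using B unfolding alt_form_def by auto

lemma alt_form_mult_left:
  "u \<in> carrier W \<Longrightarrow> v \<in> carrier W \<Longrightarrow> w \<in> carrier W \<Longrightarrow> B (u \<otimes>\<^bsub>W\<^esub> v) w = (B u w + B v w) mod int p"
  using B unfolding alt_form_def by blast

lemma alt_form_mult_right:
  "u \<in> carrier W \<Longrightarrow> v \<in> carrier W \<Longrightarrow> w \<in> carrier W \<Longrightarrow> B u (v \<otimes>\<^bsub>W\<^esub> w) = (B u v + B u w) mod int p"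
  using B unfolding alt_form_def by blast

lemma alt_form_self: "w \<in> carrier W \<Longrightarrow> B w w = 0"
  using B unfolding alt_form_def by blast

lemma alt_form_mult_self_left:
  "u \<in> carrier W \<Longrightarrow> w \<in> carrier W \<Longrightarrow> B (u \<otimes>\<^bsub>W\<^esub> w) w = B u w"
  using alt_form_mult_left alt_form_self alt_form_range by simp

context
  assumes W: "group W"
begin

interpretation W: group W by (rule W)

lemma alt_form_one_left: "w \<in> carrier W \<Longrightarrow> B \<one>\<^bsub>W\<^esub> w = 0"
  using alt_form_mult_left[of "\<one>\<^bsub>W\<^esub>" "\<one>\<^bsub>W\<^esub>" w] alt_form_range[of "\<one>\<^bsub>W\<^esub>" w]
  by (intro mod_double_eq_self_imp_zero[of _ "int p"]) auto

lemma alt_form_one_right: "w \<in> carrier W \<Longrightarrow> B w \<one>\<^bsub>W\<^esub> = 0"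
  using alt_form_mult_right[of w "\<one>\<^bsub>W\<^esub>" "\<one>\<^bsub>W\<^esub>"] alt_form_range[of w "\<one>\<^bsub>W\<^esub>"]
  by (intro mod_double_eq_self_imp_zero[of _ "int p"]) auto

lemma alt_form_pow_left: "w \<in> carrier W \<Longrightarrow> B (w [^]\<^bsub>W\<^esub> (n::nat)) w = 0"
  by (induction n) (simp_all add: alt_form_one_left alt_form_mult_self_left)

lemma alt_form_inv_left: "w \<in> carrier W \<Longrightarrow> B (inv\<^bsub>W\<^esub> w) w = 0"
  using alt_form_mult_self_left[of "inv\<^bsub>W\<^esub> w" w] alt_form_one_left by simp

lemma group_heis:
  assumes "p > 0"
  shows "group (heis W p B)"
proof (rule groupI)
  fix x y z assume "x \<in> carrier (heis W p B)" "y \<in> carrier (heis W p B)" "z \<in> carrier (heis W p B)"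
  then obtain w1 z1 w2 z2 w3 z3
    where "x = (w1, z1)" "y = (w2, z2)" "z = (w3, z3)"
      and w: "w1 \<in> carrier W" "w2 \<in> carrier W" "w3 \<in> carrier W"
    by (auto simp: heis_carrier)
  then show "x \<otimes>\<^bsub>heis W p B\<^esub> y \<otimes>\<^bsub>heis W p B\<^esub> z = x \<otimes>\<^bsub>heis W p B\<^esub> (y \<otimes>\<^bsub>heis W p B\<^esub> z)"
    by (simp add: heis_mult alt_form_mult_left alt_form_mult_right W.m_assoc
        mod_add_left_mult_right_eq mod_add_right_mult_right_eq, simp add: algebra_simps)
next
  fix x y assume "x \<in> carrier (heis W p B)" "y \<in> carrier (heis W p B)"
  then show "x \<otimes>\<^bsub>heis W p B\<^esub> y \<in> carrier (heis W p B)"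
    using \<open>p > 0\<close> by (auto simp: heis_carrier heis_mult)
next
  show "\<one>\<^bsub>heis W p B\<^esub> \<in> carrier (heis W p B)"
    using \<open>p > 0\<close> by (simp add: heis_carrier heis_one)
next
  fix x assume "x \<in> carrier (heis W p B)"
  then show "\<one>\<^bsub>heis W p B\<^esub> \<otimes>\<^bsub>heis W p B\<^esub> x = x"
    by (auto simp: heis_carrier heis_one heis_mult alt_form_one_left)
next
  fix x assume "x \<in> carrier (heis W p B)"
  then obtain w z where x: "x = (w, z)" and w: "w \<in> carrier W" by (auto simp: heis_carrier)
  have "(inv\<^bsub>W\<^esub> w, (- z) mod int p) \<otimes>\<^bsub>heis W p B\<^esub> x = \<one>\<^bsub>heis W p B\<^esub>"
    using w by (simp add: x heis_mult heis_one alt_form_inv_left mod_simps)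
  moreover have "(inv\<^bsub>W\<^esub> w, (- z) mod int p) \<in> carrier (heis W p B)"
    using w \<open>p > 0\<close> by (simp add: heis_carrier)
  ultimately show "\<exists>y\<in>carrier (heis W p B). y \<otimes>\<^bsub>heis W p B\<^esub> x = \<one>\<^bsub>heis W p B\<^esub>" by blast
qed

lemma heis_nat_pow:
  "w \<in> carrier W \<Longrightarrow> (w, z) [^]\<^bsub>heis W p B\<^esub> (n::nat) = (w [^]\<^bsub>W\<^esub> n, (int n * z) mod int p)"
  by (induction n) (simp_all add: heis_one heis_mult alt_form_pow_left mod_simps algebra_simps)

end

end

lemma heis_exponent:
  assumes "Fp_space W p" "alt_form W p B" "x \<in> carrier (heis W p B)"
  shows "x [^]\<^bsub>heis W p B\<^esub> p = \<one>\<^bsub>heis W p B\<^esub>"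
proof -
  have W: "group W" using assms(1) unfolding Fp_space_def comm_group_def by blast
  obtain w z where "x = (w, z)" "w \<in> carrier W"
    using assms(3) by (auto simp: heis_carrier)
  then show ?thesis
    using assms(1) by (simp add: heis_nat_pow[OF assms(2) W] heis_one Fp_space_def)
qed

lemma heis_derived_set_central:
  assumes "Fp_space W p" "alt_form W p B" "p > 0"
  shows "derived_set (heis W p B) (carrier (heis W p B)) \<subseteq> centre (heis W p B)"
proof
  interpret W: comm_group W using assms(1) unfolding Fp_space_def by blast
  interpret heis: group "heis W p B" using group_heis[OF assms(2) W.is_group assms(3)] .
  interpret fst: group_hom "heis W p B" W fst
    using fst_hom_heis by unfold_locales
  fix d assume "d \<in> derived_set (heis W p B) (carrier (heis W p B))"
  then obtain x y where xy: "x \<in> carrier (heis W p B)" "y \<in> carrier (heis W p B)"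
    and d: "d = x \<otimes>\<^bsub>heis W p B\<^esub> y \<otimes>\<^bsub>heis W p B\<^esub> inv\<^bsub>heis W p B\<^esub> x \<otimes>\<^bsub>heis W p B\<^esub> inv\<^bsub>heis W p B\<^esub> y"
    by blast
  have "fst d = fst x \<otimes>\<^bsub>W\<^esub> fst y \<otimes>\<^bsub>W\<^esub> inv\<^bsub>W\<^esub> fst x \<otimes>\<^bsub>W\<^esub> inv\<^bsub>W\<^esub> fst y"
    using xy by (simp add: d)
  also have "\<dots> = \<one>\<^bsub>W\<^esub>"
    using xy fst.hom_closed by (simp add: W.m_assoc W.m_lcomm[of "fst y" "inv\<^bsub>W\<^esub> fst x"])
  finally have "fst d = \<one>\<^bsub>W\<^esub>" .
  moreover have d_carrier: "d \<in> carrier (heis W p B)" using xy by (simp add: d)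
  ultimately have "d = (\<one>\<^bsub>W\<^esub>, snd d)" by (metis prod.collapse)
  then show "d \<in> centre (heis W p B)"
    using d_carrier unfolding centre_def
    by (auto simp: heis_carrier heis_mult
        alt_form_one_left[OF assms(2) W.is_group] alt_form_one_right[OF assms(2) W.is_group] add.commute)
qed

lemma iso_imp_group_hom: "group G \<Longrightarrow> group H \<Longrightarrow> \<phi> \<in> iso G H \<Longrightarrow> group_hom G H \<phi>"
  by (simp add: group_hom_def group_hom_axioms_def iso_def)

lemma iso_nat_pow_eq_one:
  assumes "group G" "group H" "\<phi> \<in> iso G H"
    and "\<And>y. y \<in> carrier H \<Longrightarrow> y [^]\<^bsub>H\<^esub> (n::nat) = \<one>\<^bsub>H\<^esub>" and "x \<in> carrier G"
  shows "x [^]\<^bsub>G\<^esub> n = \<one>\<^bsub>G\<^esub>"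
proof -
  interpret group_hom G H \<phi> using assms(1-3) by (rule iso_imp_group_hom)
  have inj: "inj_on \<phi> (carrier G)" using assms(3) by (simp add: iso_def bij_betw_def)
  have "\<phi> (x [^]\<^bsub>G\<^esub> n) = \<phi> \<one>\<^bsub>G\<^esub>" using assms(4,5) by (simp add: hom_nat_pow)
  then show ?thesis by (rule inj_onD[OF inj]) (simp_all add: assms(5))
qed

lemma iso_derived_set_central:
  assumes "group G" "group H" "\<phi> \<in> iso G H"
    and central: "derived_set H (carrier H) \<subseteq> centre H"
  shows "derived_set G (carrier G) \<subseteq> centre G"
proof
  interpret group_hom G H \<phi> using assms(1-3) by (rule iso_imp_group_hom)
  have inj: "inj_on \<phi> (carrier G)" using assms(3) by (simp add: iso_def bij_betw_def)
  fix d assume "d \<in> derived_set G (carrier G)"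
  then obtain x y where xy: "x \<in> carrier G" "y \<in> carrier G"
    and d: "d = x \<otimes>\<^bsub>G\<^esub> y \<otimes>\<^bsub>G\<^esub> inv\<^bsub>G\<^esub> x \<otimes>\<^bsub>G\<^esub> inv\<^bsub>G\<^esub> y"
    by blast
  have d_carrier: "d \<in> carrier G" using xy by (simp add: d)
  have "\<phi> d = \<phi> x \<otimes>\<^bsub>H\<^esub> \<phi> y \<otimes>\<^bsub>H\<^esub> inv\<^bsub>H\<^esub> \<phi> x \<otimes>\<^bsub>H\<^esub> inv\<^bsub>H\<^esub> \<phi> y"
    using xy by (simp add: d)
  then have "\<phi> d \<in> derived_set H (carrier H)"
    using xy by (intro UN_I[of "\<phi> x"] UN_I[of "\<phi> y"]) simp_all
  then have "\<phi> d \<in> centre H" using central by blast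
  then have "\<phi> (d \<otimes>\<^bsub>G\<^esub> g) = \<phi> (g \<otimes>\<^bsub>G\<^esub> d)" if "g \<in> carrier G" for g
    using that d_carrier unfolding centre_def by simp
  then show "d \<in> centre G"
    unfolding centre_def using d_carrier by (auto intro: inj_onD[OF inj])
qed

lemma heisenberg_p_group_finite:
  assumes "heisenberg_p_group H p W B"
  shows "finite (carrier H)"
proof -
  obtain \<phi> where "\<phi> \<in> iso H (heis W p B)" using assms unfolding heisenberg_p_group_def is_iso_def by blast
  then have "bij_betw \<phi> (carrier H) (carrier W \<times> {0..<int p})" by (simp add: iso_def heis_def)
  moreover have "finite (carrier W)" using assms unfolding heisenberg_p_group_def Fp_space_def by blast
  ultimately show ?thesis using bij_betw_finite by blast
qed

lemma heisenberg_p_group_iso: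
  assumes "p > 0" "heisenberg_p_group H p W B"
  obtains \<phi> where "\<phi> \<in> iso H (heis W p B)" and "group (heis W p B)"
    and "Fp_space W p" and "alt_form W p B"
proof -
  have Fp: "Fp_space W p" and B: "alt_form W p B"
    using assms(2) unfolding heisenberg_p_group_def by blast+
  then have "group (heis W p B)"
    using group_heis[of W p B] assms(1) unfolding Fp_space_def comm_group_def by blast
  then show ?thesis
    using that Fp B assms(2) unfolding heisenberg_p_group_def is_iso_def by blast
qed

lemma heisenberg_p_group_exponent:
  assumes "p > 0" "group H" "heisenberg_p_group H p W B" "x \<in> carrier H"
  shows "x [^]\<^bsub>H\<^esub> p = \<one>\<^bsub>H\<^esub>"
proof -
  obtain \<phi> where \<phi>: "\<phi> \<in> iso H (heis W p B)" and heis: "group (heis W p B)"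
    and W: "Fp_space W p" "alt_form W p B"
    using heisenberg_p_group_iso[OF assms(1,3)] .
  show ?thesis
    by (rule iso_nat_pow_eq_one[OF assms(2) heis \<phi> heis_exponent[OF W] assms(4)])
qed

lemma heisenberg_p_group_derived_set_central:
  assumes "p > 0" "group H" "heisenberg_p_group H p W B"
  shows "derived_set H (carrier H) \<subseteq> centre H"
proof -
  obtain \<phi> where \<phi>: "\<phi> \<in> iso H (heis W p B)" and heis: "group (heis W p B)"
    and W: "Fp_space W p" "alt_form W p B"
    using heisenberg_p_group_iso[OF assms(1,3)] .
  show ?thesis
    by (rule iso_derived_set_central[OF assms(2) heis \<phi> heis_derived_set_central[OF W assms(1)]])
qed

section \<open>Gelfand's trick\<close>

lemma representation_carrier_mat:
  "representation G n \<rho> \<Longrightarrow> x \<in> carrier G \<Longrightarrow> \<rho> x \<in> carrier_mat n n"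
  by (simp add: representation_def)

lemma representation_mult_vec:
  assumes "representation G n \<rho>" "x \<in> carrier G" "y \<in> carrier G" "u \<in> carrier_vec n"
  shows "\<rho> x *\<^sub>v (\<rho> y *\<^sub>v u) = \<rho> (x \<otimes>\<^bsub>G\<^esub> y) *\<^sub>v u"
proof -
  have "\<rho> x \<in> carrier_mat n n" "\<rho> y \<in> carrier_mat n n"
    using assms(1-3) by (simp_all add: representation_def)
  from assoc_mult_mat_vec[OF this assms(4)] show ?thesis
    using assms(1-3) by (simp add: representation_def)
qed

lemma representation_one_vec:
  "representation G n \<rho> \<Longrightarrow> u \<in> carrier_vec n \<Longrightarrow> \<rho> \<one>\<^bsub>G\<^esub> *\<^sub>v u = u"
  by (simp add: representation_def)

lemma (in group) representation_inv_mult_vec: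
  assumes "representation G n \<rho>" "x \<in> carrier G" "u \<in> carrier_vec n"
  shows "\<rho> (inv x) *\<^sub>v (\<rho> x *\<^sub>v u) = u"
  using assms by (simp add: representation_mult_vec representation_one_vec)

lemma representation_mult_vec_carrier:
  "representation G n \<rho> \<Longrightarrow> x \<in> carrier G \<Longrightarrow> u \<in> carrier_vec n \<Longrightarrow> \<rho> x *\<^sub>v u \<in> carrier_vec n"
  by (rule mult_mat_vec_carrier[OF representation_carrier_mat])

lemma eq_vec_if_minus_eq_zero:
  fixes v w :: "'a :: ab_group_add vec"
  assumes "v \<in> carrier_vec n" "w \<in> carrier_vec n" "v - w = 0\<^sub>v n"
  shows "v = w"
proof (rule eq_vecI)
  fix i assume "i < dim_vec w"
  then have "v $ i - w $ i = (v - w) $ i" by simp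
  also have "\<dots> = 0" using assms(2,3) \<open>i < dim_vec w\<close> by simp
  finally show "v $ i = w $ i" by simp
qed (use assms in simp)

lemma eq_vec_if_scalar_prod_eq:
  fixes v w :: "'a :: semiring_1 vec"
  assumes "v \<in> carrier_vec n" "w \<in> carrier_vec n" "\<And>r. r \<in> carrier_vec n \<Longrightarrow> r \<bullet> v = r \<bullet> w"
  shows "v = w"
proof (rule eq_vecI)
  fix i assume "i < dim_vec w"
  then have "i < n" using assms(2) by simp
  then show "v $ i = w $ i"
    using assms(3)[of "unit_vec n i"] assms(1,2) by simp
qed (use assms in simp)

lemma scalar_prod_vec_sum:
  fixes F :: "'b \<Rightarrow> 'a :: comm_semiring_0 vec"
  assumes "r \<in> carrier_vec n" "\<And>s. s \<in> S \<Longrightarrow> F s \<in> carrier_vec n"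
  shows "r \<bullet> vec n (\<lambda>j. \<Sum>s\<in>S. F s $ j) = (\<Sum>s\<in>S. r \<bullet> F s)"
proof -
  have "r \<bullet> vec n (\<lambda>j. \<Sum>s\<in>S. F s $ j) = (\<Sum>j<n. \<Sum>s\<in>S. r $ j * F s $ j)"
    unfolding scalar_prod_def by (simp add: atLeast0LessThan sum_distrib_left)
  also have "\<dots> = (\<Sum>s\<in>S. \<Sum>j<n. r $ j * F s $ j)"
    by (rule sum.swap)
  also have "\<dots> = (\<Sum>s\<in>S. r \<bullet> F s)"
  proof (rule sum.cong [OF refl])
    fix s assume "s \<in> S"
    then have "dim_vec (F s) = n" using assms(2) carrier_vecD by blast
    then show "(\<Sum>j<n. r $ j * F s $ j) = r \<bullet> F s"
      by (simp add: scalar_prod_def atLeast0LessThan)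
  qed
  finally show ?thesis .
qed

definition outer_sum :: "nat \<Rightarrow> 'b set \<Rightarrow> ('b \<Rightarrow> 'a :: comm_semiring_0 vec) \<Rightarrow> ('b \<Rightarrow> 'a vec) \<Rightarrow> 'a mat"
  where "outer_sum n S a b = mat n n (\<lambda>(i, j). \<Sum>s\<in>S. a s $ i * b s $ j)"

lemma outer_sum_carrier [simp]: "outer_sum n S a b \<in> carrier_mat n n"
  by (simp add: outer_sum_def)

lemma scalar_prod_outer_sum_mult_vec:
  fixes r u :: "'a :: comm_semiring_0 vec"
  assumes "r \<in> carrier_vec n" "u \<in> carrier_vec n"
    and a: "\<And>s. s \<in> S \<Longrightarrow> a s \<in> carrier_vec n" and b: "\<And>s. s \<in> S \<Longrightarrow> b s \<in> carrier_vec n"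
  shows "r \<bullet> (outer_sum n S a b *\<^sub>v u) = (\<Sum>s\<in>S. (r \<bullet> a s) * (b s \<bullet> u))"
proof -
  have "r \<bullet> (outer_sum n S a b *\<^sub>v u)
      = (\<Sum>i<n. r $ i * (\<Sum>j<n. (\<Sum>s\<in>S. a s $ i * b s $ j) * u $ j))"
    using assms(1,2) by (simp add: outer_sum_def scalar_prod_def atLeast0LessThan)
  also have "\<dots> = (\<Sum>i<n. \<Sum>j<n. \<Sum>s\<in>S. r $ i * a s $ i * (b s $ j * u $ j))"
    by (simp add: sum_distrib_left sum_distrib_right ac_simps)
  also have "\<dots> = (\<Sum>s\<in>S. \<Sum>i<n. \<Sum>j<n. r $ i * a s $ i * (b s $ j * u $ j))"
    by (subst sum.swap) (simp add: sum.swap [of _ "{..<n}" S])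
  also have "\<dots> = (\<Sum>s\<in>S. (\<Sum>i<n. r $ i * a s $ i) * (\<Sum>j<n. b s $ j * u $ j))"
    by (simp add: sum_product)
  also have "\<dots> = (\<Sum>s\<in>S. (r \<bullet> a s) * (b s \<bullet> u))"
  proof (rule sum.cong [OF refl])
    fix s assume "s \<in> S"
    then have "dim_vec (a s) = n" using a carrier_vecD by blast
    then show "(\<Sum>i<n. r $ i * a s $ i) * (\<Sum>j<n. b s $ j * u $ j) = (r \<bullet> a s) * (b s \<bullet> u)"
      using assms(2) by (simp add: scalar_prod_def atLeast0LessThan)
  qed
  finally show ?thesis .
qed

lemma scalar_prod_mult_vec_expand:
  fixes A :: "'a :: comm_semiring_1 mat"
  assumes "A \<in> carrier_mat n n" "f \<in> carrier_vec n" "v \<in> carrier_vec n"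
  shows "f \<bullet> (A *\<^sub>v v) = (\<Sum>j<n. v $ j * (f \<bullet> (A *\<^sub>v unit_vec n j)))"
proof -
  have "f \<bullet> (A *\<^sub>v v) = (transpose_mat A *\<^sub>v f) \<bullet> v"
    using transpose_vec_mult_scalar[OF assms(1,3,2)] by simp
  also have "\<dots> = (\<Sum>j<n. v $ j * (transpose_mat A *\<^sub>v f) $ j)"
    using assms by (simp add: scalar_prod_def atLeast0LessThan mult.commute)
  also have "\<dots> = (\<Sum>j<n. v $ j * (f \<bullet> (A *\<^sub>v unit_vec n j)))"
  proof (rule sum.cong [OF refl])
    fix j assume "j \<in> {..<n}"
    then have "(transpose_mat A *\<^sub>v f) $ j = (transpose_mat A *\<^sub>v f) \<bullet> unit_vec n j"
      by (simp flip: scalar_prod_right_unit)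
    also have "\<dots> = f \<bullet> (A *\<^sub>v unit_vec n j)"
      by (rule transpose_vec_mult_scalar[OF assms(1) unit_vec_carrier assms(2)])
    finally show "v $ j * (transpose_mat A *\<^sub>v f) $ j = v $ j * (f \<bullet> (A *\<^sub>v unit_vec n j))"
      by simp
  qed
  finally show ?thesis .
qed

lemma (in monoid) irreducible_rep_orbit_annihilator:
  assumes irr: "irreducible_rep G n \<rho>"
    and w: "w \<in> carrier_vec n" "w \<noteq> 0\<^sub>v n" and r: "r \<in> carrier_vec n"
    and annihilates: "\<And>x. x \<in> carrier G \<Longrightarrow> r \<bullet> (\<rho> x *\<^sub>v w) = 0"
  shows "r = 0\<^sub>v n"
proof -
  have rep: "representation G n \<rho>" using irr unfolding irreducible_rep_def by blast
  note \<rho>_carrier = representation_carrier_mat[OF rep]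
  define U where "U = {u \<in> carrier_vec n. \<forall>x\<in>carrier G. r \<bullet> (\<rho> x *\<^sub>v u) = 0}"
  have "r \<bullet> (\<rho> x *\<^sub>v (u + v)) = r \<bullet> (\<rho> x *\<^sub>v u) + r \<bullet> (\<rho> x *\<^sub>v v)"
    if "x \<in> carrier G" "u \<in> carrier_vec n" "v \<in> carrier_vec n" for x u v
    using that r \<rho>_carrier[OF that(1)]
    by (simp add: mult_add_distrib_mat_vec[of _ n n] scalar_prod_add_distrib[of _ n])
  moreover have "r \<bullet> (\<rho> x *\<^sub>v (c \<cdot>\<^sub>v u)) = c * (r \<bullet> (\<rho> x *\<^sub>v u))"
    if "x \<in> carrier G" "u \<in> carrier_vec n" for x u and c :: complex
    using that r \<rho>_carrier[OF that(1)] by (simp add: mult_mat_vec[of _ n n])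
  moreover have "\<rho> x *\<^sub>v 0\<^sub>v n = 0\<^sub>v n" if "x \<in> carrier G" for x
    using \<rho>_carrier[OF that] by auto
  ultimately have "subspace_vec n U"
    unfolding subspace_vec_def U_def using r \<rho>_carrier by auto
  moreover have "\<forall>g\<in>carrier G. \<forall>u\<in>U. \<rho> g *\<^sub>v u \<in> U"
    unfolding U_def
    by (auto simp: representation_mult_vec[OF rep] representation_mult_vec_carrier[OF rep])
  moreover have "U \<noteq> {0\<^sub>v n}"
    unfolding U_def using w annihilates by auto
  ultimately have "U = carrier_vec n"
    using irr unfolding irreducible_rep_def by blast
  then have "r \<bullet> u = 0" if "u \<in> carrier_vec n" for u
    using that representation_one_vec[OF rep] unfolding U_def by force
  then show ?thesis
    using r by (intro eq_vecI) (auto simp flip: scalar_prod_right_unit)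
qed

lemma (in monoid) schur_lemma:
  assumes irr: "irreducible_rep G n \<rho>" and M: "M \<in> carrier_mat n n"
    and comm: "\<And>x u. x \<in> carrier G \<Longrightarrow> u \<in> carrier_vec n \<Longrightarrow> M *\<^sub>v (\<rho> x *\<^sub>v u) = \<rho> x *\<^sub>v (M *\<^sub>v u)"
  shows "\<exists>l. \<forall>u\<in>carrier_vec n. M *\<^sub>v u = l \<cdot>\<^sub>v u"
proof -
  have rep: "representation G n \<rho>" and "n > 0" using irr unfolding irreducible_rep_def by blast+
  obtain l where "l \<in> spectrum M" using spectrum_non_empty[OF M \<open>n > 0\<close>] by blast
  then obtain v where v: "v \<in> carrier_vec n" "v \<noteq> 0\<^sub>v n" "M *\<^sub>v v = l \<cdot>\<^sub>v v"
    using M unfolding spectrum_def eigenvalue_def eigenvector_def by blast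
  \<comment> \<open>\<open>M\<^sup>T r - l r\<close> annihilates the orbit of the eigenvector \<open>v\<close>\<close>
  have transpose_eigen: "transpose_mat M *\<^sub>v r = l \<cdot>\<^sub>v r" if r: "r \<in> carrier_vec n" for r
  proof (rule eq_vec_if_minus_eq_zero)
    show "transpose_mat M *\<^sub>v r - l \<cdot>\<^sub>v r = 0\<^sub>v n"
    proof (rule irreducible_rep_orbit_annihilator[OF irr v(1,2)])
      show "transpose_mat M *\<^sub>v r - l \<cdot>\<^sub>v r \<in> carrier_vec n" using M r by simp
      fix x assume x: "x \<in> carrier G"
      have \<rho>v: "\<rho> x *\<^sub>v v \<in> carrier_vec n"
        using representation_mult_vec_carrier[OF rep x v(1)] .
      have "M *\<^sub>v (\<rho> x *\<^sub>v v) = l \<cdot>\<^sub>v (\<rho> x *\<^sub>v v)"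
        using comm[OF x v(1)] v(3) mult_mat_vec[OF representation_carrier_mat[OF rep x] v(1)] by simp
      then show "(transpose_mat M *\<^sub>v r - l \<cdot>\<^sub>v r) \<bullet> (\<rho> x *\<^sub>v v) = 0"
        using M r \<rho>v transpose_vec_mult_scalar[OF M \<rho>v r]
        by (simp add: minus_scalar_prod_distrib[of _ n])
    qed
  qed (use M r in simp_all)
  have "M *\<^sub>v u = l \<cdot>\<^sub>v u" if u: "u \<in> carrier_vec n" for u
  proof (rule eq_vec_if_scalar_prod_eq)
    fix r :: "complex vec" assume r: "r \<in> carrier_vec n"
    show "r \<bullet> (M *\<^sub>v u) = r \<bullet> (l \<cdot>\<^sub>v u)"
      using transpose_vec_mult_scalar[OF M u r] transpose_eigen[OF r] r u by simp
  qed (use M u in simp_all)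
  then show ?thesis by blast
qed

definition rank_one_average ::
    "('a, 'b) monoid_scheme \<Rightarrow> nat \<Rightarrow> ('a \<Rightarrow> complex mat) \<Rightarrow> complex vec \<Rightarrow> complex vec \<Rightarrow> complex mat"
  where "rank_one_average G n \<rho> w f =
    outer_sum n (carrier G) (\<lambda>y. \<rho> y *\<^sub>v w) (\<lambda>y. transpose_mat (\<rho> (inv\<^bsub>G\<^esub> y)) *\<^sub>v f)"

lemma (in group) scalar_prod_rank_one_average:
  assumes rep: "representation G n \<rho>"
    and "r \<in> carrier_vec n" "w \<in> carrier_vec n" "f \<in> carrier_vec n" "u \<in> carrier_vec n"
  shows "r \<bullet> (rank_one_average G n \<rho> w f *\<^sub>v u)
       = (\<Sum>y\<in>carrier G. (r \<bullet> (\<rho> y *\<^sub>v w)) * (f \<bullet> (\<rho> (inv y) *\<^sub>v u)))"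
  unfolding rank_one_average_def
proof (subst scalar_prod_outer_sum_mult_vec[OF assms(2,5)])
  show "\<rho> y *\<^sub>v w \<in> carrier_vec n" if "y \<in> carrier G" for y
    using representation_mult_vec_carrier[OF rep that assms(3)] .
  show "transpose_mat (\<rho> (inv y)) *\<^sub>v f \<in> carrier_vec n" if "y \<in> carrier G" for y
    using representation_carrier_mat[OF rep, of "inv y"] that assms(4) by simp
  show "(\<Sum>y\<in>carrier G. (r \<bullet> (\<rho> y *\<^sub>v w)) * ((transpose_mat (\<rho> (inv y)) *\<^sub>v f) \<bullet> u))
      = (\<Sum>y\<in>carrier G. (r \<bullet> (\<rho> y *\<^sub>v w)) * (f \<bullet> (\<rho> (inv y) *\<^sub>v u)))"
    using transpose_vec_mult_scalar[OF representation_carrier_mat[OF rep] assms(5,4)] by simp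
qed

lemma (in group) rank_one_average_commutes:
  assumes rep: "representation G n \<rho>" and w: "w \<in> carrier_vec n" and f: "f \<in> carrier_vec n"
    and x: "x \<in> carrier G" and u: "u \<in> carrier_vec n"
  shows "rank_one_average G n \<rho> w f *\<^sub>v (\<rho> x *\<^sub>v u) = \<rho> x *\<^sub>v (rank_one_average G n \<rho> w f *\<^sub>v u)"
    (is "?M *\<^sub>v _ = _")
proof -
  note \<rho>_carrier = representation_carrier_mat[OF rep]
  note \<rho>_vec = representation_mult_vec_carrier[OF rep]
  note M_scalar = scalar_prod_rank_one_average[OF rep _ w f]
  have M: "?M \<in> carrier_mat n n" by (simp add: rank_one_average_def)
  show ?thesis
  proof (rule eq_vec_if_scalar_prod_eq)
    fix r :: "complex vec" assume r: "r \<in> carrier_vec n"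
    have r': "transpose_mat (\<rho> x) *\<^sub>v r \<in> carrier_vec n" using \<rho>_carrier[OF x] r by simp
    have "r \<bullet> (?M *\<^sub>v (\<rho> x *\<^sub>v u))
        = (\<Sum>y\<in>carrier G. (r \<bullet> (\<rho> y *\<^sub>v w)) * (f \<bullet> (\<rho> (inv y \<otimes> x) *\<^sub>v u)))"
      using M_scalar[OF r \<rho>_vec[OF x u]] x u by (simp add: representation_mult_vec[OF rep])
    also have "\<dots> = (\<Sum>y\<in>carrier G. (r \<bullet> (\<rho> (x \<otimes> y) *\<^sub>v w)) * (f \<bullet> (\<rho> (inv y) *\<^sub>v u)))"
      by (rule sum.reindex_bij_witness[of _ "\<lambda>y. x \<otimes> y" "\<lambda>y. inv x \<otimes> y"])
        (use x in \<open>auto simp: m_assoc [symmetric] inv_mult_group\<close>)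
    also have "\<dots> = (\<Sum>y\<in>carrier G. ((transpose_mat (\<rho> x) *\<^sub>v r) \<bullet> (\<rho> y *\<^sub>v w)) * (f \<bullet> (\<rho> (inv y) *\<^sub>v u)))"
      using x w r by (intro sum.cong)
        (simp_all add: transpose_vec_mult_scalar[OF \<rho>_carrier[OF x] \<rho>_vec r] representation_mult_vec[OF rep])
    also have "\<dots> = r \<bullet> (\<rho> x *\<^sub>v (?M *\<^sub>v u))"
      using M_scalar[OF r' u] transpose_vec_mult_scalar[OF \<rho>_carrier[OF x] _ r, of "?M *\<^sub>v u"] M u
      by simp
    finally show "r \<bullet> (?M *\<^sub>v (\<rho> x *\<^sub>v u)) = r \<bullet> (\<rho> x *\<^sub>v (?M *\<^sub>v u))" .
  qed (use mult_mat_vec_carrier[OF M \<rho>_vec[OF x u]] \<rho>_vec[OF x mult_mat_vec_carrier[OF M u]] in simp_all)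
qed

lemma (in group) schur_orthogonality:
  assumes irr: "irreducible_rep G n \<rho>"
    and r: "r \<in> carrier_vec n" and w: "w \<in> carrier_vec n"
    and f: "f \<in> carrier_vec n" and u: "u \<in> carrier_vec n"
  shows "(\<Sum>y\<in>carrier G. (r \<bullet> (\<rho> y *\<^sub>v w)) * (f \<bullet> (\<rho> (inv y) *\<^sub>v u)))
       = of_nat (card (carrier G)) / of_nat n * (f \<bullet> w) * (r \<bullet> u)"
proof -
  have rep: "representation G n \<rho>" and "n > 0" using irr unfolding irreducible_rep_def by blast+
  define M where "M = rank_one_average G n \<rho> w f"
  note M_scalar = scalar_prod_rank_one_average[OF rep _ w f, folded M_def]
  have "M \<in> carrier_mat n n" by (simp add: M_def rank_one_average_def)
  then obtain l where l: "\<And>u. u \<in> carrier_vec n \<Longrightarrow> M *\<^sub>v u = l \<cdot>\<^sub>v u"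
    using schur_lemma[OF irr] rank_one_average_commutes[OF rep w f, folded M_def] by blast
  \<comment> \<open>compute the trace of \<open>M\<close> in two ways\<close>
  have "of_nat n * l = (\<Sum>j<n. unit_vec n j \<bullet> (M *\<^sub>v unit_vec n j))"
    by (simp add: l)
  also have "\<dots> = (\<Sum>y\<in>carrier G. \<Sum>j<n. (\<rho> y *\<^sub>v w) $ j * (f \<bullet> (\<rho> (inv y) *\<^sub>v unit_vec n j)))"
    using w by (simp add: M_scalar representation_mult_vec_carrier[OF rep] sum.swap [of _ "{..<n}"])
  also have "\<dots> = (\<Sum>y\<in>carrier G. f \<bullet> w)"
    using w f representation_mult_vec_carrier[OF rep] representation_carrier_mat[OF rep]
    by (intro sum.cong) (simp_all flip: scalar_prod_mult_vec_expand add: representation_inv_mult_vec[OF rep])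
  finally have "l = of_nat (card (carrier G)) / of_nat n * (f \<bullet> w)"
    using \<open>n > 0\<close> by (simp add: field_simps)
  then show ?thesis using M_scalar[OF r u] l[OF u] r u by simp
qed

definition orbit_sum :: "'a set \<Rightarrow> nat \<Rightarrow> ('a \<Rightarrow> complex mat) \<Rightarrow> complex vec \<Rightarrow> complex vec"
  where "orbit_sum K n \<rho> v = vec n (\<lambda>j. \<Sum>k\<in>K. (\<rho> k *\<^sub>v v) $ j)"

lemma orbit_sum_carrier [simp]: "orbit_sum K n \<rho> v \<in> carrier_vec n"
  by (simp add: orbit_sum_def)

lemma scalar_prod_orbit_sum:
  assumes "representation G n \<rho>" "K \<subseteq> carrier G" "r \<in> carrier_vec n" "v \<in> carrier_vec n"
  shows "r \<bullet> orbit_sum K n \<rho> v = (\<Sum>k\<in>K. r \<bullet> (\<rho> k *\<^sub>v v))"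
  unfolding orbit_sum_def
  by (rule scalar_prod_vec_sum[OF assms(3)]) (use assms in \<open>auto intro: representation_mult_vec_carrier\<close>)

lemma (in group) orbit_sum_fixed:
  assumes K: "subgroup K G" and rep: "representation G n \<rho>"
    and v: "v \<in> carrier_vec n" and k0: "k0 \<in> K"
  shows "\<rho> k0 *\<^sub>v orbit_sum K n \<rho> v = orbit_sum K n \<rho> v"
proof (rule eq_vec_if_scalar_prod_eq)
  interpret K: subgroup K G by (rule K)
  note \<rho>_carrier = representation_carrier_mat[OF rep]
  note \<rho>_vec = representation_mult_vec_carrier[OF rep]
  note w_scalar = scalar_prod_orbit_sum[OF rep K.subset _ v]
  show "\<rho> k0 *\<^sub>v orbit_sum K n \<rho> v \<in> carrier_vec n"
    using \<rho>_vec[OF K.mem_carrier[OF k0]] by simp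
  fix r :: "complex vec" assume r: "r \<in> carrier_vec n"
  have r': "transpose_mat (\<rho> k0) *\<^sub>v r \<in> carrier_vec n"
    using \<rho>_carrier[OF K.mem_carrier[OF k0]] r by simp
  have "r \<bullet> (\<rho> k0 *\<^sub>v orbit_sum K n \<rho> v) = (\<Sum>k\<in>K. (transpose_mat (\<rho> k0) *\<^sub>v r) \<bullet> (\<rho> k *\<^sub>v v))"
    using transpose_vec_mult_scalar[OF \<rho>_carrier[OF K.mem_carrier[OF k0]] orbit_sum_carrier[of K n \<rho> v] r]
      w_scalar[OF r']
    by simp
  also have "\<dots> = (\<Sum>k\<in>K. r \<bullet> (\<rho> (k0 \<otimes> k) *\<^sub>v v))"
    using k0 r v by (intro sum.cong)
      (simp_all add: transpose_vec_mult_scalar[OF \<rho>_carrier \<rho>_vec r] representation_mult_vec[OF rep])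
  also have "\<dots> = (\<Sum>k\<in>K. r \<bullet> (\<rho> k *\<^sub>v v))"
    by (rule sum.reindex_bij_witness[of _ "\<lambda>k. inv k0 \<otimes> k" "\<lambda>k. k0 \<otimes> k"])
      (use k0 in \<open>auto simp: K.m_inv_closed\<close>)
  also have "\<dots> = r \<bullet> orbit_sum K n \<rho> v" using w_scalar[OF r] by simp
  finally show "r \<bullet> (\<rho> k0 *\<^sub>v orbit_sum K n \<rho> v) = r \<bullet> orbit_sum K n \<rho> v" .
qed simp

lemma (in group) Hom_triv_nonzero_on_fixed_vector:
  assumes K: "subgroup K G" and "finite K" and rep: "representation G n \<rho>"
    and f: "f \<in> Hom_triv K n \<rho>" "f \<noteq> 0\<^sub>v n"
  obtains w where "w \<in> carrier_vec n" "\<And>k. k \<in> K \<Longrightarrow> \<rho> k *\<^sub>v w = w" "f \<bullet> w \<noteq> 0"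
proof -
  interpret K: subgroup K G by (rule K)
  have f_carrier: "f \<in> carrier_vec n"
    and f_inv: "\<And>k v. k \<in> K \<Longrightarrow> v \<in> carrier_vec n \<Longrightarrow> f \<bullet> (\<rho> k *\<^sub>v v) = f \<bullet> v"
    using f(1) unfolding Hom_triv_def by blast+
  have "\<exists>i<n. f $ i \<noteq> 0"
  proof (rule ccontr)
    assume "\<not> (\<exists>i<n. f $ i \<noteq> 0)"
    then have "f = 0\<^sub>v n" using f_carrier by (intro eq_vecI) auto
    then show False using f(2) by contradiction
  qed
  then obtain i where i: "i < n" "f $ i \<noteq> 0" by blast
  define v :: "complex vec" where "v = unit_vec n i"
  have v: "v \<in> carrier_vec n" by (simp add: v_def)
  have "f \<bullet> orbit_sum K n \<rho> v = of_nat (card K) * f $ i"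
    using scalar_prod_orbit_sum[OF rep K.subset f_carrier v] f_inv[OF _ v] i by (simp add: v_def)
  moreover have "card K > 0"
    using \<open>finite K\<close> K.one_closed card_gt_0_iff by blast
  ultimately show ?thesis
    using that[OF orbit_sum_carrier orbit_sum_fixed[OF K rep v]] i(2) by simp
qed

definition group_conv :: "('a, 'b) monoid_scheme \<Rightarrow> ('a \<Rightarrow> complex) \<Rightarrow> ('a \<Rightarrow> complex) \<Rightarrow> 'a \<Rightarrow> complex"
  where "group_conv G \<phi> \<psi> x = (\<Sum>y\<in>carrier G. \<phi> y * \<psi> (inv\<^bsub>G\<^esub> y \<otimes>\<^bsub>G\<^esub> x))"

lemma (in group) group_conv_anti_involution:
  assumes hom: "\<alpha> \<in> hom G G" and involutive: "\<And>x. x \<in> carrier G \<Longrightarrow> \<alpha> (\<alpha> x) = x"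
    and \<phi>: "\<And>x. x \<in> carrier G \<Longrightarrow> \<phi> (\<alpha> (inv x)) = \<phi> x"
    and \<psi>: "\<And>x. x \<in> carrier G \<Longrightarrow> \<psi> (\<alpha> (inv x)) = \<psi> x"
    and x: "x \<in> carrier G"
  shows "group_conv G \<phi> \<psi> x = group_conv G \<psi> \<phi> (\<alpha> (inv x))"
proof -
  interpret \<alpha>: group_hom G G \<alpha> using hom by unfold_locales
  have "group_conv G \<phi> \<psi> x = (\<Sum>y\<in>carrier G. \<phi> (\<alpha> (inv y)) * \<psi> (\<alpha> (inv x \<otimes> y)))"
    unfolding group_conv_def
  proof (rule sum.cong [OF refl])
    fix y assume y: "y \<in> carrier G"
    have "\<psi> (inv y \<otimes> x) = \<psi> (\<alpha> (inv x \<otimes> y))"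
      using \<psi>[of "inv y \<otimes> x"] x y by (simp add: inv_mult_group)
    then show "\<phi> y * \<psi> (inv y \<otimes> x) = \<phi> (\<alpha> (inv y)) * \<psi> (\<alpha> (inv x \<otimes> y))"
      using \<phi>[OF y] by simp
  qed
  also have "\<dots> = (\<Sum>u\<in>carrier G. \<psi> u * \<phi> (inv u \<otimes> \<alpha> (inv x)))"
  proof (rule sum.reindex_bij_witness[of _ "\<lambda>u. x \<otimes> \<alpha> u" "\<lambda>y. \<alpha> (inv x \<otimes> y)"])
    fix y assume y: "y \<in> carrier G"
    have "inv (\<alpha> (inv x \<otimes> y)) \<otimes> \<alpha> (inv x) = \<alpha> (inv y)"
      using x y by (simp add: inv_mult_group m_assoc)
    then show "\<psi> (\<alpha> (inv x \<otimes> y)) * \<phi> (inv (\<alpha> (inv x \<otimes> y)) \<otimes> \<alpha> (inv x))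
        = \<phi> (\<alpha> (inv y)) * \<psi> (\<alpha> (inv x \<otimes> y))"
      by simp
  qed (use x involutive in \<open>simp_all add: m_assoc [symmetric]\<close>)
  finally show ?thesis unfolding group_conv_def .
qed

lemma (in group) matrix_coeffs_proportional:
  assumes fin: "finite (carrier G)" and irr: "irreducible_rep G n \<rho>"
    and hom: "\<alpha> \<in> hom G G" and involutive: "\<And>x. x \<in> carrier G \<Longrightarrow> \<alpha> (\<alpha> x) = x"
    and w: "w \<in> carrier_vec n" and f: "f \<in> carrier_vec n" and g: "g \<in> carrier_vec n"
    and f_invariant: "\<And>x. x \<in> carrier G \<Longrightarrow> f \<bullet> (\<rho> (\<alpha> (inv x)) *\<^sub>v w) = f \<bullet> (\<rho> x *\<^sub>v w)"
    and g_invariant: "\<And>x. x \<in> carrier G \<Longrightarrow> g \<bullet> (\<rho> (\<alpha> (inv x)) *\<^sub>v w) = g \<bullet> (\<rho> x *\<^sub>v w)"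
    and x: "x \<in> carrier G"
  shows "(g \<bullet> w) * (f \<bullet> (\<rho> x *\<^sub>v w)) = (f \<bullet> w) * (g \<bullet> (\<rho> x *\<^sub>v w))"
proof -
  interpret \<alpha>: group_hom G G \<alpha> using hom by unfold_locales
  have rep: "representation G n \<rho>" and "n > 0" using irr unfolding irreducible_rep_def by blast+
  note \<rho>_vec = representation_mult_vec_carrier[OF rep]
  define sph where "sph a y = a \<bullet> (\<rho> y *\<^sub>v w)" for a y
  define c :: complex where "c = of_nat (card (carrier G)) / of_nat n"
  have "c \<noteq> 0"
    using fin \<open>n > 0\<close> one_closed unfolding c_def by (auto simp: card_gt_0_iff)
  have sph_conv: "group_conv G (sph a) (sph b) y = c * (b \<bullet> w) * sph a y"
    if "a \<in> carrier_vec n" "b \<in> carrier_vec n" "y \<in> carrier G" for a b y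
    unfolding group_conv_def sph_def c_def
    using schur_orthogonality[OF irr that(1) w that(2) \<rho>_vec[OF that(3) w]] that(3) w
    by (simp add: representation_mult_vec[OF rep])
  \<comment> \<open>\<open>y \<mapsto> \<alpha>(y\<inverse>)\<close> fixes both matrix coefficients and reverses convolution\<close>
  have "c * ((g \<bullet> w) * sph f x) = group_conv G (sph f) (sph g) x"
    using sph_conv f g x by simp
  also have "\<dots> = group_conv G (sph g) (sph f) (\<alpha> (inv x))"
    using f_invariant g_invariant unfolding sph_def [abs_def]
    by (intro group_conv_anti_involution[OF hom involutive _ _ x])
  also have "\<dots> = c * ((f \<bullet> w) * sph g x)"
    using sph_conv f g x g_invariant unfolding sph_def by simp
  finally show ?thesis using \<open>c \<noteq> 0\<close> unfolding sph_def by simp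
qed

lemma (in monoid) irreducible_rep_functionals_proportional:
  assumes irr: "irreducible_rep G n \<rho>" and w: "w \<in> carrier_vec n"
    and f1: "f1 \<in> carrier_vec n" "f1 \<bullet> w \<noteq> 0" and f: "f \<in> carrier_vec n"
    and coeffs: "\<And>x. x \<in> carrier G \<Longrightarrow> (f \<bullet> w) * (f1 \<bullet> (\<rho> x *\<^sub>v w)) = (f1 \<bullet> w) * (f \<bullet> (\<rho> x *\<^sub>v w))"
  shows "f = ((f \<bullet> w) / (f1 \<bullet> w)) \<cdot>\<^sub>v f1"
proof -
  have rep: "representation G n \<rho>" using irr unfolding irreducible_rep_def by blast
  have diff: "(f \<bullet> w) \<cdot>\<^sub>v f1 - (f1 \<bullet> w) \<cdot>\<^sub>v f = 0\<^sub>v n"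
  proof (rule irreducible_rep_orbit_annihilator[OF irr w])
    show "w \<noteq> 0\<^sub>v n" using f1 by auto
    show "(f \<bullet> w) \<cdot>\<^sub>v f1 - (f1 \<bullet> w) \<cdot>\<^sub>v f \<in> carrier_vec n" using f1 f by simp
    fix x assume x: "x \<in> carrier G"
    then show "((f \<bullet> w) \<cdot>\<^sub>v f1 - (f1 \<bullet> w) \<cdot>\<^sub>v f) \<bullet> (\<rho> x *\<^sub>v w) = 0"
      using coeffs[OF x] f1 f representation_mult_vec_carrier[OF rep x w]
      by (simp add: minus_scalar_prod_distrib[of _ n])
  qed
  have eq: "(f \<bullet> w) \<cdot>\<^sub>v f1 = (f1 \<bullet> w) \<cdot>\<^sub>v f"
    by (rule eq_vec_if_minus_eq_zero[OF _ _ diff]) (use f1 f in simp_all)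
  have "f = (1 / (f1 \<bullet> w)) \<cdot>\<^sub>v ((f1 \<bullet> w) \<cdot>\<^sub>v f)"
    using f1 by (simp add: smult_smult_assoc)
  also have "\<dots> = (1 / (f1 \<bullet> w)) \<cdot>\<^sub>v ((f \<bullet> w) \<cdot>\<^sub>v f1)"
    by (simp only: eq)
  also have "\<dots> = ((f \<bullet> w) / (f1 \<bullet> w)) \<cdot>\<^sub>v f1"
    by (simp add: smult_smult_assoc)
  finally show ?thesis .
qed

lemma (in group) gelfand_trick:
  assumes fin: "finite (carrier G)" and K: "subgroup K G"
    and hom: "\<alpha> \<in> hom G G" and involutive: "\<And>x. x \<in> carrier G \<Longrightarrow> \<alpha> (\<alpha> x) = x"
    and double_coset: "\<And>x. x \<in> carrier G \<Longrightarrow> \<alpha> (inv x) \<in> K <#> {x} <#> K"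
    and irr: "irreducible_rep G n \<rho>"
  shows "dim_le_one n (Hom_triv K n \<rho>)"
proof (cases "Hom_triv K n \<rho> \<subseteq> {0\<^sub>v n}")
  case True
  show ?thesis
    unfolding dim_le_one_def
  proof (intro bexI[of _ "0\<^sub>v n"] subsetI)
    fix f assume "f \<in> Hom_triv K n \<rho>"
    moreover have "(0::complex) \<cdot>\<^sub>v 0\<^sub>v n = 0\<^sub>v n" by (rule eq_vecI) auto
    ultimately have "f = (0::complex) \<cdot>\<^sub>v 0\<^sub>v n" using True by auto
    then show "f \<in> {c \<cdot>\<^sub>v 0\<^sub>v n | c. True}" by blast
  qed simp
next
  case False
  then obtain f1 where f1: "f1 \<in> Hom_triv K n \<rho>" "f1 \<noteq> 0\<^sub>v n" by blast
  interpret K: subgroup K G by (rule K)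
  have rep: "representation G n \<rho>" using irr unfolding irreducible_rep_def by blast
  have Hom_carrier: "f \<in> carrier_vec n" if "f \<in> Hom_triv K n \<rho>" for f
    using that unfolding Hom_triv_def by blast
  obtain w where w: "w \<in> carrier_vec n" "\<And>k. k \<in> K \<Longrightarrow> \<rho> k *\<^sub>v w = w" and f1w: "f1 \<bullet> w \<noteq> 0"
    using Hom_triv_nonzero_on_fixed_vector[OF K finite_subset[OF K.subset fin] rep f1] by blast
  have invariant: "f \<bullet> (\<rho> (\<alpha> (inv x)) *\<^sub>v w) = f \<bullet> (\<rho> x *\<^sub>v w)"
    if f: "f \<in> Hom_triv K n \<rho>" and x: "x \<in> carrier G" for f x
  proof -
    obtain k1 k2 where k: "k1 \<in> K" "k2 \<in> K" and eq: "\<alpha> (inv x) = k1 \<otimes> x \<otimes> k2"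
      using double_coset[OF x] unfolding set_mult_def by blast
    have "\<rho> (k1 \<otimes> x \<otimes> k2) *\<^sub>v w = \<rho> k1 *\<^sub>v (\<rho> x *\<^sub>v w)"
      using k x w by (simp flip: representation_mult_vec[OF rep] add: representation_mult_vec_carrier[OF rep])
    then show ?thesis
      using f k x representation_mult_vec_carrier[OF rep x w(1)] unfolding eq Hom_triv_def by simp
  qed
  have "f = ((f \<bullet> w) / (f1 \<bullet> w)) \<cdot>\<^sub>v f1" if f: "f \<in> Hom_triv K n \<rho>" for f
    using irreducible_rep_functionals_proportional[OF irr w(1) Hom_carrier[OF f1(1)] f1w Hom_carrier[OF f]]
      matrix_coeffs_proportional[OF fin irr hom involutive w(1) Hom_carrier[OF f1(1)] Hom_carrier[OF f]
        invariant[OF f1(1)] invariant[OF f]]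
    by blast
  then show ?thesis
    unfolding dim_le_one_def using Hom_carrier f1(1) by blast
qed

theorem theorem2p39:
  fixes H :: "('g, 'n) monoid_scheme" and W :: "('w, 'm) monoid_scheme"
    and B :: "'w \<Rightarrow> 'w \<Rightarrow> int" and p :: nat and \<alpha> :: "'g \<Rightarrow> 'g"
  assumes "Factorial_Ring.prime p" and "odd p"
    and "group H"
    and "heisenberg_p_group H p W B"
    and "\<alpha> \<in> iso H H"
    and "\<forall>h\<in>carrier H. \<alpha> (\<alpha> h) = h"
    and "\<exists>z\<in>centre H. \<alpha> z \<noteq> z"
  shows "(\<forall>h\<in>carrier H.
            fixed_points H \<alpha> <#>\<^bsub>H\<^esub> {\<alpha> h} <#>\<^bsub>H\<^esub> fixed_points H \<alpha>
          = fixed_points H \<alpha> <#>\<^bsub>H\<^esub> {inv\<^bsub>H\<^esub> h} <#>\<^bsub>H\<^esub> fixed_points H \<alpha>)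
       \<and> (\<forall>n (\<rho> :: 'g \<Rightarrow> complex mat). irreducible_rep H n \<rho> \<longrightarrow>
            dim_le_one n (Hom_triv (fixed_points H \<alpha>) n \<rho>))"
proof -
  interpret H: group H by (rule assms(3))
  let ?K = "fixed_points H \<alpha>"
  have "p > 0" using assms(1) by (rule prime_gt_0_nat)
  have hom: "\<alpha> \<in> hom H H" using assms(5) by (simp add: iso_def)
  have involutive: "\<And>x. x \<in> carrier H \<Longrightarrow> \<alpha> (\<alpha> x) = x" using assms(6) by blast
  have K: "subgroup ?K H" by (rule H.subgroup_fixed_points[OF hom])
  have double_coset: "?K <#>\<^bsub>H\<^esub> {\<alpha> h} <#>\<^bsub>H\<^esub> ?K = ?K <#>\<^bsub>H\<^esub> {inv\<^bsub>H\<^esub> h} <#>\<^bsub>H\<^esub> ?K"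
    if h: "h \<in> carrier H" for h
  proof -
    obtain k where "k \<in> ?K" "\<alpha> h = k \<otimes>\<^bsub>H\<^esub> inv\<^bsub>H\<^esub> h \<otimes>\<^bsub>H\<^esub> k"
      using H.involution_eq_sandwich_inv[OF assms(2) heisenberg_p_group_exponent[OF \<open>p > 0\<close> assms(3,4)]
          heisenberg_p_group_derived_set_central[OF \<open>p > 0\<close> assms(3,4)] hom involutive h]
      by blast
    then show ?thesis using H.double_coset_sandwich[OF K] h by simp
  qed
  have inv_in_double_coset: "\<alpha> (inv\<^bsub>H\<^esub> x) \<in> ?K <#>\<^bsub>H\<^esub> {x} <#>\<^bsub>H\<^esub> ?K" if "x \<in> carrier H" for x
    using H.mem_double_coset[OF K, of "\<alpha> (inv\<^bsub>H\<^esub> x)"] double_coset[of "inv\<^bsub>H\<^esub> x"] that hom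
    by (simp add: hom_in_carrier)
  have "dim_le_one n (Hom_triv ?K n \<rho>)" if "irreducible_rep H n \<rho>" for n \<rho>
    by (rule H.gelfand_trick[OF heisenberg_p_group_finite[OF assms(4)] K hom involutive inv_in_double_coset that])
  with double_coset show ?thesis by blast
qed

end
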